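(* (i) If for all real $t$ and $\epsilon$ one has $\operatorname{sign}\big(\mathcal{L}[\xi](t,\epsilon)\big)=\operatorname{sign}(\epsilon)$, then all zeros of the Riemann function $\xi(s)$ lie on the critical line $\Re s=1/2$. (ii) Let $\chi$ be a primitive Dirichlet character modulo $q$. If for all real $t$ and $\epsilon$ one has $\operatorname{sign}\big(\mathcal{L}[\xi(\cdot,\chi)](t,\epsilon)\big)=\operatorname{sign}(\epsilon)$, then all zeros of $\xi(s,\chi)$ lie on the critical line $\Re s=1/2$.
   Context: Write $s=\tfrac12+\epsilon+it$ with $\epsilon,t\in\mathbb{R}$. The Riemann xi function is $\xi(s)=\Gamma(\tfrac s2+1)(s-1)\pi^{-s/2}\zeta(s)$. For a primitive Dirichlet character $\chi$ modulo $q$, with $\alpha=0$ if $\chi(-1)=1$ and $\alpha=1$ if $\chi(-1)=-1$, set $\xi(s,\chi)=(q/\pi)^{(s+\alpha)/2}\Gamma(\tfrac{s+\alpha}{2})L(s,\chi)$, where $L(s,\chi)$ is the (analytically continued) Dirichlet $L$-function. For a function $f(s)$, viewed as a function of $(t,\epsilon)$, the angular momentum is $\mathcal{L}[f](t,\epsilon)=\Re f\,\partial_t\Im f-\Im f\,\partial_t\Re f$ (derivative in $t$ at fixed $\epsilon$). $\operatorname{sign}(0)=0$. *)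

theory Defs
  imports "HOL-Complex_Analysis.Complex_Analysis"
begin

definition spt :: "real \<Rightarrow> real \<Rightarrow> complex" where
  "spt t eps = Complex (1/2 + eps) t"

definition ang_mom :: "(complex \<Rightarrow> complex) \<Rightarrow> real \<Rightarrow> real \<Rightarrow> real" where
  "ang_mom f t eps =
     Re (f (spt t eps)) * deriv (\<lambda>u. Im (f (spt u eps))) t
     - Im (f (spt t eps)) * deriv (\<lambda>u. Re (f (spt u eps))) t"

text \<open>Riemann xi: the entire function equal to
  Gamma(s/2+1)(s-1) pi^(-s/2) zeta(s), zeta given by its Dirichlet series for Re s > 1
  (analytic continuation, unique by the identity theorem).\<close>
definition riemann_xi :: "complex \<Rightarrow> complex" where
  "riemann_xi = (SOME f. f holomorphic_on UNIV \<and>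
     (\<forall>s. Re s > 1 \<longrightarrow>
        f s = Gamma (s/2 + 1) * (s - 1) * (of_real pi) powr (- s/2)
              * (\<Sum>n. 1 / (of_nat (Suc n)) powr s)))"

definition dirichlet_char :: "nat \<Rightarrow> (int \<Rightarrow> complex) \<Rightarrow> bool" where
  "dirichlet_char q chi \<longleftrightarrow> q > 0 \<and>
     (\<forall>n. chi (n + int q) = chi n) \<and>
     (\<forall>m n. chi (m * n) = chi m * chi n) \<and>
     chi 1 = 1 \<and>
     (\<forall>n. chi n = 0 \<longleftrightarrow> \<not> coprime n (int q))"

text \<open>Primitive: not induced by a character of smaller modulus d | q, i.e. for no proper
  divisor d of q is chi(n) = 1 for all n coprime to q with n = 1 mod d.\<close>
definition primitive_char :: "nat \<Rightarrow> (int \<Rightarrow> complex) \<Rightarrow> bool" where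
  "primitive_char q chi \<longleftrightarrow> dirichlet_char q chi \<and>
     (\<forall>d. d dvd q \<and> d < q \<longrightarrow>
        \<not> (\<forall>n. coprime n (int q) \<and> n mod int d = 1 mod int d \<longrightarrow> chi n = 1))"

definition char_parity :: "(int \<Rightarrow> complex) \<Rightarrow> nat" where
  "char_parity chi = (if chi (-1) = 1 then 0 else 1)"

text \<open>Domain of holomorphy of the completed L-function: entire for q > 1; for q = 1
  (trivial character, completed zeta) poles at 0 and 1.\<close>
definition xiL_domain :: "nat \<Rightarrow> complex set" where
  "xiL_domain q = (if q = 1 then - {0, 1} else UNIV)"

definition xi_L :: "nat \<Rightarrow> (int \<Rightarrow> complex) \<Rightarrow> complex \<Rightarrow> complex" where
  "xi_L q chi = (SOME f. f holomorphic_on xiL_domain q \<and>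
     (\<forall>s. Re s > 1 \<longrightarrow>
        f s = (of_real (real q / pi)) powr ((s + of_nat (char_parity chi)) / 2)
              * Gamma ((s + of_nat (char_parity chi)) / 2)
              * (\<Sum>n. chi (int (Suc n)) / (of_nat (Suc n)) powr s)))"

end

theory Submission
  imports Defs
begin

lemma spt_Im_Re: "spt (Im s) (Re s - 1/2) = s"
  unfolding spt_def by (simp add: complex_eq_iff)

lemma ang_mom_eq_0_at_zero:
  assumes "f s = 0"
  shows "ang_mom f (Im s) (Re s - 1/2) = 0"
  using assms unfolding ang_mom_def spt_Im_Re by simp

lemma zero_on_critical_line_if_sgn_ang_mom:
  assumes sgn_ang_mom: "\<forall>t eps. spt t eps \<in> A \<longrightarrow> sgn (ang_mom f t eps) = sgn eps"
    and "s \<in> A" and "f s = 0"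
  shows "Re s = 1/2"
proof -
  have "sgn (Re s - 1/2) = sgn (ang_mom f (Im s) (Re s - 1/2))"
    using sgn_ang_mom \<open>s \<in> A\<close> by (simp add: spt_Im_Re)
  also have "\<dots> = 0"
    using ang_mom_eq_0_at_zero[of f s] \<open>f s = 0\<close> by simp
  finally show ?thesis
    by (simp add: sgn_eq_0_iff)
qed

theorem mainTheorem4:
  shows "((\<forall>t eps. sgn (ang_mom riemann_xi t eps) = sgn eps)
            \<longrightarrow> (\<forall>s. riemann_xi s = 0 \<longrightarrow> Re s = 1/2))
       \<and> (\<forall>(q::nat) chi. primitive_char q chi \<longrightarrow>
            (\<forall>t eps. spt t eps \<in> xiL_domain q \<longrightarrow> sgn (ang_mom (xi_L q chi) t eps) = sgn eps)
            \<longrightarrow> (\<forall>s \<in> xiL_domain q. xi_L q chi s = 0 \<longrightarrow> Re s = 1/2))"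
proof (intro conjI allI impI ballI)
  fix s
  assume "\<forall>t eps. sgn (ang_mom riemann_xi t eps) = sgn eps" and "riemann_xi s = 0"
  then show "Re s = 1/2"
    using zero_on_critical_line_if_sgn_ang_mom[of UNIV] by blast
next
  fix q :: nat and chi s
  assume "\<forall>t eps. spt t eps \<in> xiL_domain q \<longrightarrow> sgn (ang_mom (xi_L q chi) t eps) = sgn eps"
    and "s \<in> xiL_domain q" and "xi_L q chi s = 0"
  then show "Re s = 1/2"
    by (rule zero_on_critical_line_if_sgn_ang_mom)
qed

end
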